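(* Let $\mu^*=\max_{p\in(0,1]}\frac{p}{w_-(p)}$. Then $\mu^*>1$, and there exists a unique $p^*\in(0,1)$ such that $\mu^*w_-(p^* )=p^*$.
   Context: $w_-:[0,1]\to[0,1]$ is strictly increasing, thrice differentiable, with $w_-(0)=0$, $w_-(1)=1$, $w_-'(0)>1$, $w_-'(1)>1$ and $w_-'''(p)>0$ for all $p$ (so $w_-$ is strictly concave then strictly convex). *)

theory Defs
  imports Complex_Main
begin

end

theory Submission
  imports Defs
begin

text \<open>Since \<open>w'(0) > 1\<close>, the ratio \<open>p / w p\<close> stays below 1 near 0, and since \<open>w'(1) > 1\<close>
  and \<open>w 1 = 1\<close> it exceeds 1 just below 1; so it attains its supremum \<open>\<mu>* > 1\<close> at a point
  of \<open>(0, 1)\<close>. The function \<open>\<mu>* w p - p\<close> is nonnegative on \<open>[0, 1]\<close>, so each of its zeros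
  in \<open>(0, 1)\<close> is a double zero. Two distinct ones would give, by Rolle's theorem, three zeros
  of its first derivative, two of its second and one of its third derivative \<open>\<mu>* w'''\<close>,
  which is positive.\<close>

lemma Rolle_within:
  fixes f f' :: "real \<Rightarrow> real"
  assumes "a < b" and "f a = f b" and "{a..b} \<subseteq> S"
    and deriv: "\<And>x. x \<in> S \<Longrightarrow> (f has_real_derivative f' x) (at x within S)"
  obtains z where "a < z" "z < b" "f' z = 0"
proof -
  have deriv_Icc: "(f has_real_derivative f' x) (at x within {a..b})" if "x \<in> {a..b}" for x
    by (rule DERIV_subset[OF deriv]) (use that \<open>{a..b} \<subseteq> S\<close> in auto)
  then have cont: "continuous_on {a..b} f"
    by (meson DERIV_continuous continuous_on_eq_continuous_within)
  have "(f has_derivative (*) (f' x)) (at x)" if "a < x" "x < b" for x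
    using deriv_Icc[of x] that by (simp add: at_within_Icc_at has_field_derivative_def)
  from Rolle_deriv[OF \<open>a < b\<close> \<open>f a = f b\<close> cont this]
  obtain z where z: "a < z" "z < b" "(*) (f' z) = (\<lambda>v. 0)"
    by blast
  have "f' z = 0"
    using fun_cong[OF z(3), of 1] by simp
  with z show thesis
    using that by blast
qed

lemma DERIV_within_Icc_interior_min:
  fixes f :: "real \<Rightarrow> real"
  assumes "(f has_real_derivative D) (at x within {a..b})" and "a < x" "x < b"
    and min: "\<And>y. y \<in> {a..b} \<Longrightarrow> f x \<le> f y"
  shows "D = 0"
proof (rule DERIV_local_min)
  show "(f has_real_derivative D) (at x)"
    using assms(1-3) by (simp add: at_within_Icc_at)
  show "0 < min (x - a) (b - x)"
    using assms(2,3) by simp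
  show "\<forall>y. \<bar>x - y\<bar> < min (x - a) (b - x) \<longrightarrow> f x \<le> f y"
    using min by (auto simp: abs_if split: if_splits)
qed

lemma nonneg_third_deriv_pos_interior_zero_unique:
  fixes g g1 g2 g3 :: "real \<Rightarrow> real"
  assumes d1: "\<And>x. x \<in> {l..u} \<Longrightarrow> (g has_real_derivative g1 x) (at x within {l..u})"
    and d2: "\<And>x. x \<in> {l..u} \<Longrightarrow> (g1 has_real_derivative g2 x) (at x within {l..u})"
    and d3: "\<And>x. x \<in> {l..u} \<Longrightarrow> (g2 has_real_derivative g3 x) (at x within {l..u})"
    and nonneg: "\<And>x. x \<in> {l..u} \<Longrightarrow> 0 \<le> g x"
    and pos: "\<And>x. x \<in> {l..u} \<Longrightarrow> 0 < g3 x"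
    and zeros: "a \<in> {l<..<u}" "b \<in> {l<..<u}" "g a = 0" "g b = 0"
  shows "a = b"
proof -
  have False if ab: "a < b" "a \<in> {l<..<u}" "b \<in> {l<..<u}" "g a = 0" "g b = 0" for a b
  proof -
    have crit: "g1 x = 0" if "x \<in> {l<..<u}" "g x = 0" for x
      using DERIV_within_Icc_interior_min[OF d1] that nonneg by auto
    obtain c where c: "a < c" "c < b" "g1 c = 0"
      using Rolle_within[OF \<open>a < b\<close> _ _ d1] ab by auto
    obtain r1 where r1: "a < r1" "r1 < c" "g2 r1 = 0"
      using Rolle_within[OF \<open>a < c\<close> _ _ d2] ab c crit by auto
    obtain r2 where r2: "c < r2" "r2 < b" "g2 r2 = 0"
      using Rolle_within[OF \<open>c < b\<close> _ _ d2] ab c crit by auto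
    obtain s where "r1 < s" "s < r2" "g3 s = 0"
      using Rolle_within[OF _ _ _ d3, of r1 r2] ab c r1 r2 by auto
    with pos[of s] ab r1 r2 show False
      by auto
  qed
  with zeros show ?thesis
    by (metis linorder_neqE_linordered_idom)
qed

lemma touching_points_unique_if_above_line:
  fixes w w1 w2 w3 :: "real \<Rightarrow> real"
  assumes d1: "\<And>x. x \<in> {l..u} \<Longrightarrow> (w has_real_derivative w1 x) (at x within {l..u})"
    and d2: "\<And>x. x \<in> {l..u} \<Longrightarrow> (w1 has_real_derivative w2 x) (at x within {l..u})"
    and d3: "\<And>x. x \<in> {l..u} \<Longrightarrow> (w2 has_real_derivative w3 x) (at x within {l..u})"
    and pos: "\<And>x. x \<in> {l..u} \<Longrightarrow> 0 < w3 x" and "0 < c"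
    and above: "\<And>y. y \<in> {l..u} \<Longrightarrow> y \<le> c * w y"
    and touch: "a \<in> {l<..<u}" "c * w a = a" "b \<in> {l<..<u}" "c * w b = b"
  shows "a = b"
proof (rule nonneg_third_deriv_pos_interior_zero_unique[of l u "\<lambda>y. c * w y - y"
      "\<lambda>y. c * w1 y - 1" "\<lambda>y. c * w2 y" "\<lambda>y. c * w3 y"])
  fix x :: real
  assume x: "x \<in> {l..u}"
  show "((\<lambda>y. c * w y - y) has_real_derivative c * w1 x - 1) (at x within {l..u})"
    using d1[OF x] by (auto intro!: derivative_eq_intros)
  show "((\<lambda>y. c * w1 y - 1) has_real_derivative c * w2 x) (at x within {l..u})"
    using d2[OF x] by (auto intro!: derivative_eq_intros)
  show "((\<lambda>y. c * w2 y) has_real_derivative c * w3 x) (at x within {l..u})"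
    using d3[OF x] by (auto intro!: derivative_eq_intros)
  show "0 < c * w3 x"
    using pos[OF x] \<open>0 < c\<close> by simp
  show "0 \<le> c * w x - x"
    using above[OF x] by simp
qed (use touch in auto)

lemma DERIV_at_right_gt_imp_eventually_above_line:
  fixes f :: "real \<Rightarrow> real"
  assumes "(f has_real_derivative D) (at_right a)" and "c < D"
  shows "eventually (\<lambda>y. c * (y - a) < f y - f a) (at_right a)"
proof -
  have "eventually (\<lambda>y. c < (f y - f a) / (y - a)) (at_right a)"
    using assms by (auto simp: has_field_derivative_iff intro: order_tendstoD)
  with eventually_at_right_less show ?thesis
    by eventually_elim (simp add: pos_less_divide_eq)
qed

lemma DERIV_at_left_gt_imp_eventually_below_line:
  fixes f :: "real \<Rightarrow> real"
  assumes "(f has_real_derivative D) (at_left b)" and "c < D"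
  shows "eventually (\<lambda>y. c * (b - y) < f b - f y) (at_left b)"
proof -
  have "eventually (\<lambda>y. c < (f y - f b) / (y - b)) (at_left b)"
    using assms by (auto simp: has_field_derivative_iff intro: order_tendstoD)
  moreover have "eventually (\<lambda>y. y < b) (at_left b)"
    unfolding eventually_at_left_field by (intro exI[of _ "b - 1"]) auto
  ultimately show ?thesis
    by eventually_elim (simp add: neg_less_divide_eq algebra_simps)
qed

lemma continuous_on_Ioc_attains_sup:
  fixes f :: "real \<Rightarrow> real"
  assumes cont: "continuous_on {a<..b} f" and p: "p \<in> {a<..b}"
    and near_a: "eventually (\<lambda>x. f x \<le> f p) (at_right a)"
  obtains m where "m \<in> {a<..b}" "\<And>x. x \<in> {a<..b} \<Longrightarrow> f x \<le> f m"
    "(SUP x\<in>{a<..b}. f x) = f m"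
proof -
  obtain d where "a < d" and d: "\<And>x. a < x \<Longrightarrow> x < d \<Longrightarrow> f x \<le> f p"
    using near_a by (auto simp: eventually_at_right_field)
  define e where "e = min d p"
  have e: "a < e" "e \<le> p"
    using \<open>a < d\<close> p by (auto simp: e_def)
  have "continuous_on {e..b} f"
    using e by (auto intro: continuous_on_subset[OF cont])
  then obtain m where m: "m \<in> {e..b}" and max: "\<And>x. x \<in> {e..b} \<Longrightarrow> f x \<le> f m"
    using continuous_attains_sup[of "{e..b}" f] e p by auto
  have ub: "f x \<le> f m" if "x \<in> {a<..b}" for x
  proof (cases "x < e")
    case True
    then have "f x \<le> f p"
      using d that by (auto simp: e_def)
    also have "f p \<le> f m"
      using max e p by auto
    finally show ?thesis .
  qed (use that max in auto)
  have "m \<in> {a<..b}"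
    using m e by auto
  with ub show thesis
    by (intro that) (auto intro: cSup_eq_maximum)
qed

lemma ratio_attains_max_gt_one:
  fixes w :: "real \<Rightarrow> real"
  assumes cont: "continuous_on {0..1} w"
    and pos: "\<And>x. x \<in> {0<..1} \<Longrightarrow> 0 < w x" and "w 0 = 0" "w 1 = 1"
    and "(w has_real_derivative D0) (at_right 0)" "1 < D0"
    and "(w has_real_derivative D1) (at_left 1)" "1 < D1"
  obtains p where "p \<in> {0<..<1}" "\<And>q. q \<in> {0<..1} \<Longrightarrow> q / w q \<le> p / w p"
    "(SUP q\<in>{0<..1}. q / w q) = p / w p" "1 < p / w p"
proof -
  have "eventually (\<lambda>y. y < w y) (at_right 0)"
    using DERIV_at_right_gt_imp_eventually_above_line[of w D0 0 1] assms by simp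
  with eventually_at_right_less have below_one: "eventually (\<lambda>q. q / w q < 1) (at_right 0)"
    by eventually_elim simp
  have "eventually (\<lambda>y. w y < y) (at_left 1)"
    using DERIV_at_left_gt_imp_eventually_below_line[of w D1 1 1] assms by simp
  moreover have "eventually (\<lambda>y::real. y \<in> {0<..<1}) (at_left 1)"
    by (rule eventually_at_left_real) simp
  ultimately have "eventually (\<lambda>y. y \<in> {0<..<1} \<and> 1 < y / w y) (at_left 1)"
    by eventually_elim (use pos in auto)
  then obtain p0 where p0: "p0 \<in> {0<..<1}" "1 < p0 / w p0"
    using eventually_happens'[OF trivial_limit_at_left_real] by blast
  have "w q \<noteq> 0" if "q \<in> {0<..1}" for q
    using pos[OF that] by simp
  then have cont_ratio: "continuous_on {0<..1} (\<lambda>q. q / w q)"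
    by (auto intro!: continuous_intros continuous_on_subset[OF cont])
  have "p0 \<in> {0<..1}"
    using p0 by simp
  moreover have "eventually (\<lambda>q. q / w q \<le> p0 / w p0) (at_right 0)"
    using below_one p0 by (auto elim: eventually_mono)
  ultimately obtain p where p: "p \<in> {0<..1}" "\<And>q. q \<in> {0<..1} \<Longrightarrow> q / w q \<le> p / w p"
    "(SUP q\<in>{0<..1}. q / w q) = p / w p"
    by (rule continuous_on_Ioc_attains_sup[OF cont_ratio]) blast
  have "1 < p / w p"
    using p(2)[of p0] p0 by auto
  moreover have "p \<noteq> 1"
    using \<open>1 < p / w p\<close> \<open>w 1 = 1\<close> by auto
  ultimately show thesis
    by (intro that[of p]) (use p in auto)
qed

theorem lemma1:
  fixes w w1 w2 w3 :: "real \<Rightarrow> real"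
  assumes mono: "strict_mono_on {0..1} w"
    and range: "w ` {0..1} \<subseteq> {0..1}"
    and d1: "\<And>x. x \<in> {0..1} \<Longrightarrow> (w has_real_derivative w1 x) (at x within {0..1})"
    and d2: "\<And>x. x \<in> {0..1} \<Longrightarrow> (w1 has_real_derivative w2 x) (at x within {0..1})"
    and d3: "\<And>x. x \<in> {0..1} \<Longrightarrow> (w2 has_real_derivative w3 x) (at x within {0..1})"
    and w0: "w 0 = 0" and w1': "w 1 = 1"
    and d0: "w1 0 > 1" and d1': "w1 1 > 1"
    and d3pos: "\<And>p. p \<in> {0..1} \<Longrightarrow> w3 p > 0"
  shows "(\<exists>p\<in>{0<..1}. p / w p = (SUP q\<in>{0<..1}. q / w q)) \<and>
         (SUP p\<in>{0<..1}. p / w p) > 1 \<and>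
         (\<exists>!p. p \<in> {0<..<1} \<and> (SUP q\<in>{0<..1}. q / w q) * w p = p)"
proof -
  have pos: "0 < w x" if "x \<in> {0<..1}" for x
    using strict_mono_onD[OF mono, of 0 x] that w0 by auto
  have "continuous_on {0..1} w"
    using d1 by (meson DERIV_continuous continuous_on_eq_continuous_within)
  moreover have "(w has_real_derivative w1 0) (at_right 0)" "(w has_real_derivative w1 1) (at_left 1)"
    using d1[of 0] d1[of 1] by (simp_all add: at_within_Icc_at_right at_within_Icc_at_left)
  ultimately obtain p where p: "p \<in> {0<..<1}" "\<And>q. q \<in> {0<..1} \<Longrightarrow> q / w q \<le> p / w p"
    and sup: "(SUP q\<in>{0<..1}. q / w q) = p / w p" and gt1: "1 < p / w p"
    using ratio_attains_max_gt_one[of w] pos w0 w1' d0 d1' by blast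
  define M where "M = p / w p"
  have "1 < M"
    using gt1 by (simp add: M_def)
  then have "0 < M"
    by simp
  have above: "y \<le> M * w y" if "y \<in> {0..1}" for y
    using p(2)[of y] pos[of y] that w0 by (cases "y = 0") (auto simp: M_def field_simps)
  note unique = touching_points_unique_if_above_line[OF d1 d2 d3 d3pos \<open>0 < M\<close> above]
  have "M * w p = p"
    using pos[of p] p(1) by (simp add: M_def)
  show ?thesis
    unfolding sup M_def[symmetric]
  proof (intro conjI)
    show "\<exists>q\<in>{0<..1}. q / w q = M"
      using p(1) by (intro bexI[of _ p]) (auto simp: M_def)
    show "\<exists>!q. q \<in> {0<..<1} \<and> M * w q = q"
      using p(1) \<open>M * w p = p\<close> unique by (intro ex1I[of _ p]) auto
  qed (rule \<open>1 < M\<close>)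
qed

end
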